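(* Let $X$ be a proper geodesic $\delta$-hyperbolic space, $\xi\in\partial X$, $S$ a horosphere centered at $\xi$ and $B$ the (open) horoball bounded by $S$. There is a constant $C$ depending only on $\delta$ such that for every $p,q\in S$ and every path $c$ in $X\setminus B$ joining $p$ and $q$, the length of $c$ satisfies $\ell(c)\ge 2^{\frac{d(p,q)-C-2}{2\delta}}-C$.
   Context: A Busemann function $b$ centered at $\xi$ is $b(x)=\lim_{t\to\infty}(d(x,\gamma(t))-t)$ for a geodesic ray $\gamma$ converging to $\xi$; a horosphere centered at $\xi$ is a level set $S=\{b=b_0\}$ and the horoball bounded by it is $B=\{b<b_0\}$ (the side containing points close to $\xi$). *)

theory Defs
  imports "HOL-Analysis.Analysis"
begin

definition proper_mspace :: "'a set \<Rightarrow> ('a \<Rightarrow> 'a \<Rightarrow> real) \<Rightarrow> bool" where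
  "proper_mspace M d \<longleftrightarrow>
     (\<forall>x\<in>M. \<forall>r. compactin (Metric_space.mtopology M d) (Metric_space.mcball M d x r))"

definition geodesic_seg :: "'a set \<Rightarrow> ('a \<Rightarrow> 'a \<Rightarrow> real) \<Rightarrow> (real \<Rightarrow> 'a) \<Rightarrow> 'a \<Rightarrow> 'a \<Rightarrow> bool" where
  "geodesic_seg M d g x y \<longleftrightarrow>
     g 0 = x \<and> g (d x y) = y \<and> g ` {0..d x y} \<subseteq> M \<and>
     (\<forall>s\<in>{0..d x y}. \<forall>t\<in>{0..d x y}. d (g s) (g t) = \<bar>s - t\<bar>)"

definition geodesic_mspace :: "'a set \<Rightarrow> ('a \<Rightarrow> 'a \<Rightarrow> real) \<Rightarrow> bool" where
  "geodesic_mspace M d \<longleftrightarrow> (\<forall>x\<in>M. \<forall>y\<in>M. \<exists>g. geodesic_seg M d g x y)"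

definition delta_hyperbolic :: "'a set \<Rightarrow> ('a \<Rightarrow> 'a \<Rightarrow> real) \<Rightarrow> real \<Rightarrow> bool" where
  "delta_hyperbolic M d \<delta> \<longleftrightarrow>
     (\<forall>x\<in>M. \<forall>y\<in>M. \<forall>z\<in>M. \<forall>gxy gyz gxz.
        geodesic_seg M d gxy x y \<and> geodesic_seg M d gyz y z \<and> geodesic_seg M d gxz x z \<longrightarrow>
        (\<forall>p\<in>gxy ` {0..d x y}. \<exists>q\<in>gyz ` {0..d y z} \<union> gxz ` {0..d x z}. d p q \<le> \<delta>))"

definition geodesic_ray :: "'a set \<Rightarrow> ('a \<Rightarrow> 'a \<Rightarrow> real) \<Rightarrow> (real \<Rightarrow> 'a) \<Rightarrow> bool" where
  "geodesic_ray M d \<gamma> \<longleftrightarrow>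
     \<gamma> ` {0..} \<subseteq> M \<and> (\<forall>s\<ge>0. \<forall>t\<ge>0. d (\<gamma> s) (\<gamma> t) = \<bar>s - t\<bar>)"

definition busemann :: "('a \<Rightarrow> 'a \<Rightarrow> real) \<Rightarrow> (real \<Rightarrow> 'a) \<Rightarrow> 'a \<Rightarrow> real" where
  "busemann d \<gamma> x = Lim at_top (\<lambda>t. d x (\<gamma> t) - t)"

definition horosphere :: "'a set \<Rightarrow> ('a \<Rightarrow> 'a \<Rightarrow> real) \<Rightarrow> (real \<Rightarrow> 'a) \<Rightarrow> real \<Rightarrow> 'a set" where
  "horosphere M d \<gamma> b0 = {x\<in>M. busemann d \<gamma> x = b0}"

definition horoball :: "'a set \<Rightarrow> ('a \<Rightarrow> 'a \<Rightarrow> real) \<Rightarrow> (real \<Rightarrow> 'a) \<Rightarrow> real \<Rightarrow> 'a set" where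
  "horoball M d \<gamma> b0 = {x\<in>M. busemann d \<gamma> x < b0}"

definition mpath :: "'a set \<Rightarrow> ('a \<Rightarrow> 'a \<Rightarrow> real) \<Rightarrow> (real \<Rightarrow> 'a) \<Rightarrow> bool" where
  "mpath M d c \<longleftrightarrow>
     continuous_map (top_of_set {0..1}) (Metric_space.mtopology M d) c"

definition mpath_length :: "('a \<Rightarrow> 'a \<Rightarrow> real) \<Rightarrow> (real \<Rightarrow> 'a) \<Rightarrow> ereal" where
  "mpath_length d c =
     (SUP (n, t) \<in> {(n, t). t 0 = (0::real) \<and> t n = 1 \<and> (\<forall>i<n. t i \<le> t (Suc i))}.
        ereal (\<Sum>i<n. d (c (t i)) (c (t (Suc i)))))"

end

theory Submission
  imports Defs
begin

(* Let m be the midpoint of a geodesic [p, q]. Slimness of the triangles p, q, \<gamma> t with t \<rightarrow> \<infinity>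
   gives b(m) \<le> b0 - d(p, q)/2 + 2\<delta>. A path of length L outside the horoball can be sampled at
   n \<le> L + 1 points, consecutive ones less than 3 apart. Halving this chain k times, slimness puts
   every point of [p, q] within k\<delta> of a geodesic between consecutive sample points as soon as
   n \<le> 2^k. Since b is 1-Lipschitz and at least b0 at the sample points, d(p, q)/2 \<le> (k + 2)\<delta> + 3,
   so n, and with it L, grows exponentially in d(p, q). *)

lemma antimono_bounded_below_tendsto_Inf:
  fixes f :: "real \<Rightarrow> real"
  assumes antimono: "\<And>s t. 0 \<le> s \<Longrightarrow> s \<le> t \<Longrightarrow> f t \<le> f s"
    and bounded: "\<And>t. 0 \<le> t \<Longrightarrow> B \<le> f t"
  shows "(f \<longlongrightarrow> Inf (f ` {0..})) at_top"
proof (rule decreasing_tendsto)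
  have bdd: "bdd_below (f ` {0..})"
    using bounded by (auto intro!: bdd_belowI)
  show "\<forall>\<^sub>F t in at_top. Inf (f ` {0..}) \<le> f t"
    using eventually_ge_at_top[of 0] by eventually_elim (simp add: cInf_lower[OF _ bdd])
next
  fix a assume "Inf (f ` {0..}) < a"
  then obtain t0 where t0: "t0 \<ge> 0" "f t0 < a"
    using cInf_lessD[of "f ` {0..}" a] by auto
  from eventually_ge_at_top[of t0] show "\<forall>\<^sub>F t in at_top. f t < a"
    by eventually_elim (use antimono t0 in fastforce)
qed

lemma continuous_map_compact_uniform:
  fixes S :: "'b::metric_space set"
  assumes "Metric_space M d" "compact S"
    and "continuous_map (top_of_set S) (Metric_space.mtopology M d) c" "\<epsilon> > 0"
  shows "\<exists>\<eta>>0. \<forall>x\<in>S. \<forall>y\<in>S. dist y x < \<eta> \<longrightarrow> d (c y) (c x) < \<epsilon>"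
proof -
  interpret Metric_space M d by fact
  have top: "mtopology_of (submetric euclidean_metric S) = top_of_set S"
    by (simp add: mtopology_of_submetric)
  have "compact_space (top_of_set S)"
    using assms(2) by (simp add: compact_space_subtopology)
  then have "uniformly_continuous_map (submetric euclidean_metric S) (metric (M, d)) c"
    using assms(3) top by (intro continuous_imp_uniformly_continuous_map) simp
  then show ?thesis
    using assms(4) unfolding uniformly_continuous_map_def by auto
qed

lemma busemann_tendsto:
  assumes "Metric_space M d" "geodesic_ray M d \<gamma>" "x \<in> M"
  shows "((\<lambda>t. d x (\<gamma> t) - t) \<longlongrightarrow> busemann d \<gamma> x) at_top"
proof -
  interpret Metric_space M d by fact
  have ray: "\<And>t. t \<ge> 0 \<Longrightarrow> \<gamma> t \<in> M" "\<And>s t. s \<ge> 0 \<Longrightarrow> t \<ge> 0 \<Longrightarrow> d (\<gamma> s) (\<gamma> t) = \<bar>s - t\<bar>"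
    using assms(2) unfolding geodesic_ray_def by auto
  have "((\<lambda>t. d x (\<gamma> t) - t) \<longlongrightarrow> Inf ((\<lambda>t. d x (\<gamma> t) - t) ` {0..})) at_top"
  proof (rule antimono_bounded_below_tendsto_Inf)
    fix s t :: real assume st: "0 \<le> s" "s \<le> t"
    have "d x (\<gamma> t) \<le> d x (\<gamma> s) + d (\<gamma> s) (\<gamma> t)"
      using assms(3) ray st by (intro triangle) auto
    then show "d x (\<gamma> t) - t \<le> d x (\<gamma> s) - s"
      using ray(2)[of s t] st by simp
  next
    fix t :: real assume t: "0 \<le> t"
    have "d (\<gamma> 0) (\<gamma> t) \<le> d (\<gamma> 0) x + d x (\<gamma> t)"
      using assms(3) ray t by (intro triangle) auto
    then show "- d (\<gamma> 0) x \<le> d x (\<gamma> t) - t"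
      using ray(2)[of 0 t] t by simp
  qed
  then show ?thesis
    unfolding busemann_def by (metis tendsto_Lim trivial_limit_at_top_linorder)
qed

lemma busemann_le_add_dist:
  assumes "Metric_space M d" "geodesic_ray M d \<gamma>" "x \<in> M" "y \<in> M"
  shows "busemann d \<gamma> y \<le> busemann d \<gamma> x + d x y"
proof -
  interpret Metric_space M d by fact
  have "((\<lambda>t. d x (\<gamma> t) - t + d x y) \<longlongrightarrow> busemann d \<gamma> x + d x y) at_top"
    by (intro tendsto_intros busemann_tendsto[OF assms(1-3)])
  moreover have "\<forall>\<^sub>F t in at_top. d y (\<gamma> t) - t \<le> d x (\<gamma> t) - t + d x y"
    using eventually_ge_at_top[of 0]
  proof eventually_elim
    case (elim t)
    then have "\<gamma> t \<in> M"
      using assms(2) unfolding geodesic_ray_def by auto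
    then show ?case
      using triangle[of y x "\<gamma> t"] assms(3,4) commute[of x y] by simp
  qed
  ultimately show ?thesis
    using busemann_tendsto[OF assms(1,2,4)] tendsto_le[OF trivial_limit_at_top_linorder] by blast
qed

lemma geodesic_seg_image_subset:
  assumes "geodesic_seg M d g x y"
  shows "g ` {0..d x y} \<subseteq> M"
  using assms unfolding geodesic_seg_def by auto

lemma geodesic_seg_dist:
  assumes "geodesic_seg M d g x y" "s \<in> {0..d x y}"
  shows "d x (g s) = s" "d (g s) y = d x y - s"
proof -
  have iso: "\<forall>s\<in>{0..d x y}. \<forall>t\<in>{0..d x y}. d (g s) (g t) = \<bar>s - t\<bar>"
    and ends: "g 0 = x" "g (d x y) = y"
    using assms(1) unfolding geodesic_seg_def by blast+
  have "d (g 0) (g s) = \<bar>0 - s\<bar>" "d (g s) (g (d x y)) = \<bar>s - d x y\<bar>"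
    using iso assms(2) by auto
  then show "d x (g s) = s" "d (g s) y = d x y - s"
    using assms(2) ends by auto
qed

lemma geodesic_seg_endpoints:
  assumes "Metric_space M d" "geodesic_seg M d g x y"
  shows "x \<in> M" "y \<in> M"
proof -
  have "0 \<in> {0..d x y}" "d x y \<in> {0..d x y}"
    using Metric_space.nonneg[OF assms(1)] by auto
  moreover have "g 0 = x" "g (d x y) = y"
    using assms(2) unfolding geodesic_seg_def by auto
  ultimately show "x \<in> M" "y \<in> M"
    using geodesic_seg_image_subset[OF assms(2)] by force+
qed

lemma geodesic_seg_reverse:
  assumes "Metric_space M d" "geodesic_seg M d g x y"
  shows "geodesic_seg M d (\<lambda>t. g (d x y - t)) y x"
    and "(\<lambda>t. g (d x y - t)) ` {0..d y x} = g ` {0..d x y}"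
proof -
  have comm: "d y x = d x y"
    using Metric_space.commute[OF assms(1)] by simp
  have iso: "\<forall>s\<in>{0..d x y}. \<forall>t\<in>{0..d x y}. d (g s) (g t) = \<bar>s - t\<bar>"
    and ends: "g 0 = x" "g (d x y) = y" "g ` {0..d x y} \<subseteq> M"
    using assms(2) unfolding geodesic_seg_def by blast+
  have "u \<in> (\<lambda>t. g (d x y - t)) ` {0..d x y}" if u: "u \<in> g ` {0..d x y}" for u
  proof -
    obtain s where "s \<in> {0..d x y}" "u = g s"
      using u by blast
    then have "d x y - s \<in> {0..d x y}" "u = g (d x y - (d x y - s))"
      by auto
    then show ?thesis
      by blast
  qed
  then have image: "(\<lambda>t. g (d x y - t)) ` {0..d x y} = g ` {0..d x y}"
    by auto
  then show "(\<lambda>t. g (d x y - t)) ` {0..d y x} = g ` {0..d x y}"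
    by (simp add: comm)
  show "geodesic_seg M d (\<lambda>t. g (d x y - t)) y x"
    unfolding geodesic_seg_def comm
  proof (intro conjI ballI)
    fix s t assume "s \<in> {0..d x y}" "t \<in> {0..d x y}"
    then show "d (g (d x y - s)) (g (d x y - t)) = \<bar>s - t\<bar>"
      using iso by (subst bspec[OF bspec[OF iso]]) auto
  qed (use ends image in auto)
qed

lemma geodesic_choice:
  assumes "geodesic_mspace M d"
  obtains G where "\<forall>x\<in>M. \<forall>y\<in>M. geodesic_seg M d (G x y) x y"
  using assms unfolding geodesic_mspace_def by metis

lemma delta_hyperbolic_slim:
  assumes ms: "Metric_space M d" and hyp: "delta_hyperbolic M d \<delta>"
    and gxy: "geodesic_seg M d gxy x y" and gxz: "geodesic_seg M d gxz x z"
    and gzy: "geodesic_seg M d gzy z y" and p: "p \<in> gxy ` {0..d x y}"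
  shows "\<exists>w \<in> gxz ` {0..d x z} \<union> gzy ` {0..d z y}. d p w \<le> \<delta>"
proof -
  have "x \<in> M" "y \<in> M" "z \<in> M"
    using geodesic_seg_endpoints[OF ms] gxy gxz by blast+
  then show ?thesis
    using hyp[unfolded delta_hyperbolic_def, rule_format, of x y z gxy "\<lambda>t. gzy (d z y - t)" gxz p]
      gxy gxz p geodesic_seg_reverse[OF ms gzy] by blast
qed

lemma delta_hyperbolic_midpoint_dist:
  assumes ms: "Metric_space M d" and hyp: "delta_hyperbolic M d \<delta>" and geo: "geodesic_mspace M d"
    and g: "geodesic_seg M d g p q" and z: "z \<in> M"
  shows "d (g (d p q / 2)) z \<le> max (d p z) (d q z) - d p q / 2 + 2 * \<delta>"
proof -
  interpret Metric_space M d by fact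
  define m where "m = g (d p q / 2)"
  have pq: "p \<in> M" "q \<in> M"
    using geodesic_seg_endpoints[OF ms g] by auto
  have mid: "d p q / 2 \<in> {0..d p q}"
    by simp
  have m: "m \<in> M" "d p m = d p q / 2" "d m q = d p q / 2"
    using geodesic_seg_image_subset[OF g] mid geodesic_seg_dist[OF g mid] unfolding m_def by auto
  obtain gpz gzq where gpz: "geodesic_seg M d gpz p z" and gzq: "geodesic_seg M d gzq z q"
    using geo pq z unfolding geodesic_mspace_def by meson
  obtain w where w: "w \<in> gpz ` {0..d p z} \<union> gzq ` {0..d z q}" "d m w \<le> \<delta>"
    using delta_hyperbolic_slim[OF ms hyp g gpz gzq] mid unfolding m_def by blast
  from w(1) show ?thesis
  proof
    assume "w \<in> gpz ` {0..d p z}"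
    then obtain s where s: "s \<in> {0..d p z}" "w = gpz s" by auto
    have "w \<in> M" "d p w = s" "d w z = d p z - s"
      using geodesic_seg_image_subset[OF gpz] s geodesic_seg_dist[OF gpz s(1)] by auto
    then show ?thesis
      using triangle[of p w m] triangle[of m w z] commute[of w m] pq z m w(2)
      unfolding m_def by force
  next
    assume "w \<in> gzq ` {0..d z q}"
    then obtain s where s: "s \<in> {0..d z q}" "w = gzq s" by auto
    have "w \<in> M" "d z w = s" "d w q = d z q - s"
      using geodesic_seg_image_subset[OF gzq] s geodesic_seg_dist[OF gzq s(1)] by auto
    then show ?thesis
      using triangle[of m w q] triangle[of m w z] commute[of w z] commute[of z q] pq z m w(2)
      unfolding m_def by force
  qed
qed

lemma busemann_midpoint_le:
  assumes ms: "Metric_space M d" and ray: "geodesic_ray M d \<gamma>" and hyp: "delta_hyperbolic M d \<delta>"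
    and geo: "geodesic_mspace M d" and g: "geodesic_seg M d g p q"
    and bp: "busemann d \<gamma> p = b0" and bq: "busemann d \<gamma> q = b0"
  shows "busemann d \<gamma> (g (d p q / 2)) \<le> b0 - d p q / 2 + 2 * \<delta>"
proof -
  let ?m = "g (d p q / 2)"
  have pq: "p \<in> M" "q \<in> M"
    using geodesic_seg_endpoints[OF ms g] by auto
  have m: "?m \<in> M"
    using geodesic_seg_image_subset[OF g] Metric_space.nonneg[OF ms, of p q] by auto
  have "((\<lambda>t. max (d p (\<gamma> t) - t) (d q (\<gamma> t) - t) - d p q / 2 + 2 * \<delta>)
      \<longlongrightarrow> max b0 b0 - d p q / 2 + 2 * \<delta>) at_top"
    using busemann_tendsto[OF ms ray pq(1)] busemann_tendsto[OF ms ray pq(2)] bp bq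
    by (intro tendsto_intros) auto
  moreover have "\<forall>\<^sub>F t in at_top.
      d ?m (\<gamma> t) - t \<le> max (d p (\<gamma> t) - t) (d q (\<gamma> t) - t) - d p q / 2 + 2 * \<delta>"
    using eventually_ge_at_top[of 0]
  proof eventually_elim
    case (elim t)
    then have "\<gamma> t \<in> M"
      using ray unfolding geodesic_ray_def by auto
    then show ?case
      using delta_hyperbolic_midpoint_dist[OF ms hyp geo g] by fastforce
  qed
  ultimately show ?thesis
    using busemann_tendsto[OF ms ray m] tendsto_le[OF trivial_limit_at_top_linorder] by fastforce
qed

lemma delta_hyperbolic_near_third_side:
  assumes ms: "Metric_space M d" and hyp: "delta_hyperbolic M d \<delta>"
    and gxy: "geodesic_seg M d gxy x y" and gxz: "geodesic_seg M d gxz x z"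
    and gzy: "geodesic_seg M d gzy z y" and "Z \<subseteq> M"
    and near: "\<And>w. w \<in> gxz ` {0..d x z} \<union> gzy ` {0..d z y} \<Longrightarrow> \<exists>u\<in>Z. d w u \<le> r"
    and p: "p \<in> gxy ` {0..d x y}"
  shows "\<exists>u\<in>Z. d p u \<le> r + \<delta>"
proof -
  interpret Metric_space M d by fact
  obtain w where w: "w \<in> gxz ` {0..d x z} \<union> gzy ` {0..d z y}" "d p w \<le> \<delta>"
    using delta_hyperbolic_slim[OF ms hyp gxy gxz gzy p] by blast
  obtain u where u: "u \<in> Z" "d w u \<le> r"
    using near[OF w(1)] by blast
  have "p \<in> M" "w \<in> M" "u \<in> M"
    using p w(1) u(1) \<open>Z \<subseteq> M\<close> geodesic_seg_image_subset[OF gxy] geodesic_seg_image_subset[OF gxz]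
      geodesic_seg_image_subset[OF gzy] by blast+
  then have "d p u \<le> r + \<delta>"
    using triangle[of p w u] w(2) u(2) by linarith
  then show ?thesis
    using u(1) by blast
qed

definition piecewise_geodesic ::
    "('a \<Rightarrow> 'a \<Rightarrow> real) \<Rightarrow> ('a \<Rightarrow> 'a \<Rightarrow> real \<Rightarrow> 'a) \<Rightarrow> (nat \<Rightarrow> 'a) \<Rightarrow> nat \<Rightarrow> 'a set" where
  "piecewise_geodesic d G x n = (\<Union>i<n. G (x i) (x (Suc i)) ` {0..d (x i) (x (Suc i))})"

lemma piecewise_geodesic_subset:
  assumes G: "\<forall>u\<in>M. \<forall>v\<in>M. geodesic_seg M d (G u v) u v" and x: "\<forall>i\<le>n. x i \<in> M"
  shows "piecewise_geodesic d G x n \<subseteq> M"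
  unfolding piecewise_geodesic_def
proof (rule UN_least)
  fix i assume "i \<in> {..<n}"
  then show "G (x i) (x (Suc i)) ` {0..d (x i) (x (Suc i))} \<subseteq> M"
    using x by (intro geodesic_seg_image_subset G[rule_format]) auto
qed

lemma piecewise_geodesic_shift_subset:
  assumes "a + l \<le> n"
  shows "piecewise_geodesic d G (\<lambda>i. x (a + i)) l \<subseteq> piecewise_geodesic d G x n"
proof
  fix z assume "z \<in> piecewise_geodesic d G (\<lambda>i. x (a + i)) l"
  then obtain i where "i < l" "z \<in> G (x (a + i)) (x (Suc (a + i))) ` {0..d (x (a + i)) (x (Suc (a + i)))}"
    unfolding piecewise_geodesic_def by auto
  then show "z \<in> piecewise_geodesic d G x n"
    unfolding piecewise_geodesic_def using assms by (intro UN_I[of "a + i"]) auto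
qed

lemma split_le_two_powers:
  fixes n :: nat
  assumes "2 ^ k < n" "n \<le> 2 ^ Suc k"
  shows "1 \<le> n div 2" "n div 2 \<le> 2 ^ k" "n - n div 2 \<le> 2 ^ k" "n div 2 < n"
proof -
  define K :: nat where "K = 2 ^ k"
  have "K < n" "n \<le> 2 * K"
    using assms unfolding K_def by auto
  then have "1 \<le> n div 2" "n div 2 \<le> K" "n - n div 2 \<le> K" "n div 2 < n"
    by presburger+
  then show "1 \<le> n div 2" "n div 2 \<le> 2 ^ k" "n - n div 2 \<le> 2 ^ k" "n div 2 < n"
    unfolding K_def .
qed

lemma geodesic_near_chain:
  fixes x :: "nat \<Rightarrow> 'a"
  assumes ms: "Metric_space M d" and hyp: "delta_hyperbolic M d \<delta>" and "\<delta> \<ge> 0"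
    and G: "\<forall>u\<in>M. \<forall>v\<in>M. geodesic_seg M d (G u v) u v"
  shows "\<forall>i\<le>n. x i \<in> M \<Longrightarrow> 1 \<le> n \<Longrightarrow> n \<le> 2 ^ k \<Longrightarrow> p \<in> G (x 0) (x n) ` {0..d (x 0) (x n)} \<Longrightarrow>
    \<exists>z\<in>piecewise_geodesic d G x n. d p z \<le> real k * \<delta>"
proof (induction k arbitrary: n x p)
  case 0
  then have "n = 1" "p \<in> M"
    using geodesic_seg_image_subset[OF G[rule_format, of "x 0" "x n"]] by auto
  then have "d p p \<le> real 0 * \<delta>" "p \<in> piecewise_geodesic d G x n"
    using 0(4) Metric_space.zero[OF ms, of p p] unfolding piecewise_geodesic_def by simp_all
  then show ?case
    by blast
next
  case (Suc k)
  show ?case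
  proof (cases "n \<le> 2 ^ k")
    case True
    then obtain z where "z \<in> piecewise_geodesic d G x n" "d p z \<le> real k * \<delta>"
      using Suc.IH[OF Suc.prems(1,2) True Suc.prems(4)] by blast
    moreover have "real k * \<delta> \<le> real (Suc k) * \<delta>"
      using \<open>\<delta> \<ge> 0\<close> by (simp add: mult_right_mono)
    ultimately show ?thesis
      by (meson order_trans)
  next
    case False
    define m where "m = n div 2"
    have m: "1 \<le> m" "m \<le> 2 ^ k" "n - m \<le> 2 ^ k" "m < n"
      using split_le_two_powers[of k n] False Suc.prems(3) unfolding m_def by auto
    have near_part: "\<exists>z\<in>piecewise_geodesic d G x n. d w z \<le> real k * \<delta>"
      if "a + l \<le> n" "1 \<le> l" "l \<le> 2 ^ k" "w \<in> G (x a) (x (a + l)) ` {0..d (x a) (x (a + l))}"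
      for a l w
      using Suc.IH[of l "\<lambda>i. x (a + i)" w] piecewise_geodesic_shift_subset[OF that(1)] that Suc.prems(1)
      by force
    have xM: "x 0 \<in> M" "x m \<in> M" "x n \<in> M"
      using Suc.prems(1) m(4) by auto
    have "m + (n - m) = n"
      using m(4) by simp
    then have "\<exists>z\<in>piecewise_geodesic d G x n. d w z \<le> real k * \<delta>"
      if "w \<in> G (x 0) (x m) ` {0..d (x 0) (x m)} \<union> G (x m) (x n) ` {0..d (x m) (x n)}" for w
      using that near_part[of 0 m w] near_part[of m "n - m" w] m by auto
    then have "\<exists>z\<in>piecewise_geodesic d G x n. d p z \<le> real k * \<delta> + \<delta>"
      by (rule delta_hyperbolic_near_third_side[OF ms hyp G[rule_format, OF xM(1,3)]
            G[rule_format, OF xM(1,2)] G[rule_format, OF xM(2,3)]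
            piecewise_geodesic_subset[OF G Suc.prems(1)] _ Suc.prems(4)])
    then show ?thesis
      by (simp add: algebra_simps)
  qed
qed

lemma dist_le_partial_sum_diff:
  assumes ms: "Metric_space M d" and y: "\<forall>i\<le>N. y i \<in> M" and "a \<le> b" "b \<le> N"
  shows "d (y a) (y b) \<le> (\<Sum>i<b. d (y i) (y (Suc i))) - (\<Sum>i<a. d (y i) (y (Suc i)))"
  using assms(3,4)
proof (induction b)
  case 0
  then show ?case
    using y Metric_space.zero[OF ms, of "y 0" "y 0"] by simp
next
  case (Suc b)
  show ?case
  proof (cases "a = Suc b")
    case True
    then show ?thesis
      using y Suc.prems Metric_space.zero[OF ms, of "y a" "y a"] by simp
  next
    case False
    then have "a \<le> b"
      using Suc.prems by simp
    moreover have "d (y a) (y (Suc b)) \<le> d (y a) (y b) + d (y b) (y (Suc b))"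
      using Metric_space.triangle[OF ms] y Suc.prems \<open>a \<le> b\<close> by simp
    ultimately show ?thesis
      using Suc.IH Suc.prems by simp
  qed
qed

lemma level_crossing_indices:
  fixes S :: "nat \<Rightarrow> real"
  assumes S0: "S 0 = 0" and mono: "mono S"
    and step: "\<And>i. i < N \<Longrightarrow> S (Suc i) < S i + 1"
  obtains n idx where "1 \<le> n" "real n \<le> S N + 1" "idx 0 = 0" "idx n = N" "\<And>r. idx r \<le> N"
    "\<And>r. r < n \<Longrightarrow> \<bar>S (idx (Suc r)) - S (idx r)\<bar> < 3"
proof -
  define R where "R = nat \<lfloor>S N\<rfloor>"
  have R: "real R \<le> S N" "S N < real R + 1"
    using monoD[OF mono, of 0 N] S0 unfolding R_def by (simp_all add: of_nat_nat)
  define idx where "idx r = (LEAST j. real r \<le> S j \<or> j = N)" for r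
  have idx_le: "idx r \<le> N" for r
    unfolding idx_def by (rule Least_le) simp
  have idx_reached: "real r \<le> S (idx r) \<or> idx r = N" for r
    unfolding idx_def by (rule LeastI[of _ N]) simp
  have idx_below: "S (idx r) < real r + 1" for r
  proof (cases "idx r")
    case 0
    then show ?thesis
      using S0 by simp
  next
    case (Suc j)
    then have "\<not> (real r \<le> S j \<or> j = N)"
      using not_less_Least[of j "\<lambda>j. real r \<le> S j \<or> j = N"] unfolding idx_def by simp
    then show ?thesis
      using step[of j] idx_le[of r] Suc by force
  qed
  have idx_above: "real r - 1 \<le> S (idx r)" if "r \<le> R + 1" for r
    using idx_reached[of r] R that by auto
  have "idx 0 = 0"
    unfolding idx_def using S0 by (simp add: Least_eq_0)
  moreover have "idx (R + 1) = N"
  proof -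
    have "S (idx (R + 1)) < real (R + 1)"
      using monoD[OF mono idx_le[of "R + 1"]] R by simp
    then show ?thesis
      using idx_reached[of "R + 1"] by linarith
  qed
  moreover have "\<bar>S (idx (Suc r)) - S (idx r)\<bar> < 3" if "r < R + 1" for r
    using idx_below[of r] idx_below[of "Suc r"] idx_above[of r] idx_above[of "Suc r"] that by auto
  ultimately show thesis
    using that[of "R + 1" idx] idx_le R by auto
qed

lemma chain_coarsening:
  assumes ms: "Metric_space M d" and y: "\<forall>i\<le>N. y i \<in> M"
    and step: "\<And>i. i < N \<Longrightarrow> d (y i) (y (Suc i)) < 1"
  obtains n x where "1 \<le> n" "real n \<le> (\<Sum>i<N. d (y i) (y (Suc i))) + 1" "x 0 = y 0" "x n = y N"
    "\<And>r. x r \<in> y ` {..N}" "\<And>r. r < n \<Longrightarrow> d (x r) (x (Suc r)) < 3"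
proof -
  define S where "S j = (\<Sum>i<j. d (y i) (y (Suc i)))" for j
  have dist_S: "d (y a) (y b) \<le> \<bar>S b - S a\<bar>" if "a \<le> N" "b \<le> N" for a b
  proof (cases "a \<le> b")
    case True
    then show ?thesis
      using dist_le_partial_sum_diff[OF ms y True that(2)] unfolding S_def by linarith
  next
    case False
    then show ?thesis
      using dist_le_partial_sum_diff[OF ms y _ that(1), of b] Metric_space.commute[OF ms]
      unfolding S_def by fastforce
  qed
  have "S 0 = 0"
    unfolding S_def by simp
  moreover have "mono S"
    unfolding S_def using Metric_space.nonneg[OF ms] by (intro monoI sum_mono2) auto
  moreover have "S (Suc i) < S i + 1" if "i < N" for i
    using step[OF that] unfolding S_def by simp
  ultimately obtain n idx where idx: "1 \<le> n" "real n \<le> S N + 1" "idx 0 = 0" "idx n = N"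
      "\<And>r. idx r \<le> N" "\<And>r. r < n \<Longrightarrow> \<bar>S (idx (Suc r)) - S (idx r)\<bar> < 3"
    using level_crossing_indices by blast
  show thesis
  proof (rule that[of n "\<lambda>r. y (idx r)"])
    show "d (y (idx r)) (y (idx (Suc r))) < 3" if "r < n" for r
      using dist_S[OF idx(5)[of r] idx(5)[of "Suc r"]] idx(6)[OF that] by linarith
  qed (use idx in \<open>auto simp: S_def\<close>)
qed

lemma mpath_in_space:
  assumes "Metric_space M d" "mpath M d c" "t \<in> {0..1}"
  shows "c t \<in> M"
  using assms continuous_map_image_subset_topspace Metric_space.topspace_mtopology
  unfolding mpath_def by fastforce

lemma mpath_length_ge_partition_sum:
  assumes "t 0 = 0" "t n = 1" "\<And>i. i < n \<Longrightarrow> t i \<le> t (Suc i)"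
  shows "ereal (\<Sum>i<n. d (c (t i)) (c (t (Suc i)))) \<le> mpath_length d c"
  unfolding mpath_length_def by (rule SUP_upper2[of "(n, t)"]) (use assms in auto)

lemma mpath_uniform_sampling:
  assumes ms: "Metric_space M d" and c: "mpath M d c"
  obtains N :: nat where "1 \<le> N" "\<And>i. i < N \<Longrightarrow> d (c (i / N)) (c (Suc i / N)) < 1"
proof -
  obtain \<eta> where \<eta>: "\<eta> > 0" "\<forall>x\<in>{0..1}. \<forall>y\<in>{0..1}. dist y x < \<eta> \<longrightarrow> d (c y) (c x) < 1"
    using continuous_map_compact_uniform[OF ms compact_Icc c[unfolded mpath_def], of 1] by auto
  obtain N :: nat where N: "1 / \<eta> < N"
    using reals_Archimedean2 by blast
  have "0 < 1 / \<eta>"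
    using \<eta>(1) by simp
  then have "0 < real N"
    using N by linarith
  then have "1 \<le> N" "1 / N < \<eta>"
    using N \<eta>(1) by (simp_all add: field_simps)
  moreover have "d (c (i / N)) (c (Suc i / N)) < 1" if "i < N" for i
  proof -
    have "i / N \<in> {0..1}" "Suc i / N \<in> {0..1}" "dist (i / N) (Suc i / N) = 1 / N"
      using that by (auto simp: field_simps dist_real_def)
    then show ?thesis
      using \<eta>(2) \<open>1 / N < \<eta>\<close> by simp
  qed
  ultimately show thesis
    using that by blast
qed

lemma mpath_coarse_chain:
  assumes ms: "Metric_space M d" and c: "mpath M d c"
  obtains n x where "1 \<le> n" "ereal (real n - 1) \<le> mpath_length d c" "x 0 = c 0" "x n = c 1"
    "\<And>r. x r \<in> c ` {0..1}" "\<And>r. r < n \<Longrightarrow> d (x r) (x (Suc r)) < 3"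
proof -
  obtain N :: nat where N: "1 \<le> N" "\<And>i. i < N \<Longrightarrow> d (c (i / N)) (c (Suc i / N)) < 1"
    using mpath_uniform_sampling[OF ms c] by blast
  define y where "y i = c (i / N)" for i :: nat
  have y01: "i / N \<in> {0..1}" if "i \<le> N" for i :: nat
    using that N(1) by (auto simp: field_simps)
  have "\<forall>i\<le>N. y i \<in> M"
    using mpath_in_space[OF ms c] y01 unfolding y_def by blast
  moreover have "d (y i) (y (Suc i)) < 1" if "i < N" for i
    using N(2)[OF that] unfolding y_def by simp
  ultimately obtain n x where nx: "1 \<le> n" "real n \<le> (\<Sum>i<N. d (y i) (y (Suc i))) + 1"
      "x 0 = y 0" "x n = y N" "\<And>r. x r \<in> y ` {..N}" "\<And>r. r < n \<Longrightarrow> d (x r) (x (Suc r)) < 3"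
    using chain_coarsening[OF ms] by blast
  have "ereal (\<Sum>i<N. d (y i) (y (Suc i))) \<le> mpath_length d c"
    using mpath_length_ge_partition_sum[where t = "\<lambda>i. real i / real N" and n = N] N(1)
    unfolding y_def by (simp add: divide_right_mono)
  then have "ereal (real n - 1) \<le> mpath_length d c"
    using nx(2) by (intro order_trans[OF _ \<open>ereal _ \<le> _\<close>]) simp
  moreover have "x r \<in> c ` {0..1}" for r
    using nx(5)[of r] y01 unfolding y_def by auto
  ultimately show thesis
    using that[OF nx(1)] nx(3,4,6) N(1) unfolding y_def by simp
qed

lemma horosphere_dist_le_chain_depth:
  assumes ms: "Metric_space M d" and hyp: "delta_hyperbolic M d \<delta>" and "\<delta> \<ge> 0"
    and geo: "geodesic_mspace M d" and ray: "geodesic_ray M d \<gamma>"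
    and p: "p \<in> horosphere M d \<gamma> b0" and q: "q \<in> horosphere M d \<gamma> b0"
    and x: "\<forall>i\<le>n. x i \<in> M - horoball M d \<gamma> b0" "x 0 = p" "x n = q" "1 \<le> n" "n \<le> 2 ^ k"
    and steps: "\<And>i. i < n \<Longrightarrow> d (x i) (x (Suc i)) < 3"
  shows "d p q / 2 \<le> (real k + 2) * \<delta> + 3"
proof -
  interpret Metric_space M d by fact
  obtain G where G: "\<forall>u\<in>M. \<forall>v\<in>M. geodesic_seg M d (G u v) u v"
    using geodesic_choice[OF geo] by blast
  have pq: "p \<in> M" "q \<in> M" "busemann d \<gamma> p = b0" "busemann d \<gamma> q = b0"
    using p q unfolding horosphere_def by auto
  define m where "m = G p q (d p q / 2)"
  have m_seg: "m \<in> G p q ` {0..d p q}"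
    unfolding m_def by simp
  have m: "m \<in> M" "busemann d \<gamma> m \<le> b0 - d p q / 2 + 2 * \<delta>"
    using geodesic_seg_image_subset[OF G[rule_format, OF pq(1,2)]] m_seg
      busemann_midpoint_le[OF ms ray hyp geo G[rule_format, OF pq(1,2)] pq(3,4)]
    unfolding m_def by auto
  have xM: "\<forall>i\<le>n. x i \<in> M"
    using x(1) by blast
  have "\<exists>z\<in>piecewise_geodesic d G x n. d m z \<le> real k * \<delta>"
    using geodesic_near_chain[OF ms hyp \<open>\<delta> \<ge> 0\<close> G xM x(4,5)] m_seg x(2,3) by simp
  then obtain i z where iz: "i < n" "z \<in> G (x i) (x (Suc i)) ` {0..d (x i) (x (Suc i))}"
      "d m z \<le> real k * \<delta>"
    unfolding piecewise_geodesic_def by blast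
  have "x i \<in> M - horoball M d \<gamma> b0" "x (Suc i) \<in> M"
    using x(1) iz(1) by auto
  then have xi: "x i \<in> M" "x (Suc i) \<in> M" "b0 \<le> busemann d \<gamma> (x i)"
    unfolding horoball_def by auto
  obtain s where s: "s \<in> {0..d (x i) (x (Suc i))}" "z = G (x i) (x (Suc i)) s"
    using iz(2) by blast
  have "z \<in> M" "d z (x i) < 3"
    using geodesic_seg_image_subset[OF G[rule_format, OF xi(1,2)]] s
      geodesic_seg_dist(1)[OF G[rule_format, OF xi(1,2)] s(1)] steps[OF iz(1)] commute[of z "x i"]
    by auto
  then have "d m (x i) \<le> real k * \<delta> + 3"
    using triangle[of m z "x i"] m(1) xi(1) iz(3) by linarith
  moreover have "busemann d \<gamma> (x i) \<le> busemann d \<gamma> m + d m (x i)"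
    using busemann_le_add_dist[OF ms ray m(1) xi(1)] .
  ultimately show ?thesis
    using m(2) xi(3) by (simp add: algebra_simps)
qed

lemma length_bound_of_chain_depth:
  fixes \<delta> D L :: real
  assumes "\<delta> > 0" "D / 2 \<le> (real k + 2) * \<delta> + 3" "2 ^ k \<le> 2 * n" "real n - 1 \<le> L"
  shows "2 powr ((D - (6 * \<delta> + 4) - 2) / (2 * \<delta>)) - (6 * \<delta> + 4) \<le> L"
proof -
  have "(D - (6 * \<delta> + 4) - 2) / (2 * \<delta>) \<le> real k - 1"
    using assms(1,2) by (simp add: field_simps)
  then have "2 powr ((D - (6 * \<delta> + 4) - 2) / (2 * \<delta>)) \<le> 2 powr (real k - 1)"
    by (rule powr_mono) simp
  also have "\<dots> = 2 ^ k / 2"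
    by (simp add: powr_diff powr_realpow)
  also have "\<dots> \<le> real n"
    using assms(3) by (simp add: of_nat_le_iff[symmetric, where 'a = real])
  finally show ?thesis
    using assms(1,4) by linarith
qed

theorem lemma2p2:
  fixes \<delta> :: real
  assumes "\<delta> > 0"
  shows "\<exists>C::real. \<forall>(M :: 'a set) d \<gamma> b0 p q c.
     Metric_space M d \<and> proper_mspace M d \<and> geodesic_mspace M d \<and> delta_hyperbolic M d \<delta> \<and>
     geodesic_ray M d \<gamma> \<and>
     p \<in> horosphere M d \<gamma> b0 \<and> q \<in> horosphere M d \<gamma> b0 \<and>
     mpath M d c \<and> c 0 = p \<and> c 1 = q \<and> c ` {0..1} \<subseteq> M - horoball M d \<gamma> b0
     \<longrightarrow> mpath_length d c \<ge> ereal (2 powr ((d p q - C - 2) / (2 * \<delta>)) - C)"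
proof (intro exI[of _ "6 * \<delta> + 4"] allI impI, elim conjE)
  fix M :: "'a set" and d \<gamma> b0 p q c
  assume ms: "Metric_space M d" and "proper_mspace M d" and geo: "geodesic_mspace M d"
    and hyp: "delta_hyperbolic M d \<delta>" and ray: "geodesic_ray M d \<gamma>"
    and p: "p \<in> horosphere M d \<gamma> b0" and q: "q \<in> horosphere M d \<gamma> b0"
    and c: "mpath M d c" "c 0 = p" "c 1 = q" "c ` {0..1} \<subseteq> M - horoball M d \<gamma> b0"
  obtain n x where nx: "1 \<le> n" "ereal (real n - 1) \<le> mpath_length d c" "x 0 = p" "x n = q"
      "\<And>r. x r \<in> c ` {0..1}" "\<And>r. r < n \<Longrightarrow> d (x r) (x (Suc r)) < 3"
    using mpath_coarse_chain[OF ms c(1)] c(2,3) by metis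
  have outside: "\<forall>i\<le>n. x i \<in> M - horoball M d \<gamma> b0"
    using nx(5) c(4) by blast
  obtain j where j: "2 ^ j \<le> n" "n < 2 ^ (j + 1)"
    using ex_power_ivl1[of 2 n] nx(1) by auto
  have "n \<le> 2 ^ (j + 1)"
    using j(2) by simp
  then have "d p q / 2 \<le> (real (j + 1) + 2) * \<delta> + 3"
    by (rule horosphere_dist_le_chain_depth[OF ms hyp less_imp_le[OF assms] geo ray p q outside
          nx(3,4,1) _ nx(6)])
  moreover have "2 ^ (j + 1) \<le> 2 * n"
    using j(1) by simp
  ultimately have "2 powr ((d p q - (6 * \<delta> + 4) - 2) / (2 * \<delta>)) - (6 * \<delta> + 4) \<le> real n - 1"
    using length_bound_of_chain_depth[OF assms] by blast
  then show "ereal (2 powr ((d p q - (6 * \<delta> + 4) - 2) / (2 * \<delta>)) - (6 * \<delta> + 4)) \<le> mpath_length d c"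
    using nx(2) by (meson ereal_less_eq(3) order_trans)
qed

end
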